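(* Let $r$ and $k$ be positive integers and $x\ge1$, $y$ real. Define $$R(r,k,x)=\sum_{\substack{y<r<q_1<\cdots<q_k\le x\\ r\mid q_1-1,\ q_1\mid q_2-1,\ \dots,\ q_{k-1}\mid q_k-1}}\frac{1}{q_k},$$ where $q_1,\dots,q_k$ range over primes. Then $R(r,k,x)\le\frac{(\log x+1)^k}{r}$. Consequently, $$S(r,k,x):=\sum_{\substack{y<r<q_1<\cdots<q_k\le n\le x\\ r\mid q_1-1,\ q_1\mid q_2-1,\ \dots,\ q_{k-1}\mid q_k-1,\ q_k\mid n}}1\ \le\ \frac{x(\log x+1)^k}{r},$$ where $q_1,\dots,q_k$ range over primes and $n$ over positive integers. *)

theory Defs
  imports Complex_Main "HOL-Computational_Algebra.Primes"
begin

text \<open>Prime chains y < r < q_1 < ... < q_k <= x with r | q_1 - 1 and q_i | q_(i+1) - 1,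
  represented as lists qs = [q_1, ..., q_k] of primes.\<close>
definition prime_chains :: "real \<Rightarrow> nat \<Rightarrow> nat \<Rightarrow> real \<Rightarrow> nat list set" where
  "prime_chains y r k x =
     {qs. length qs = k \<and> y < real r \<and> (\<forall>q\<in>set qs. prime q \<and> real q \<le> x)
          \<and> sorted_wrt (<) (r # qs)
          \<and> (\<forall>i<k. (r # qs) ! i dvd qs ! i - 1)}"

definition R_sum :: "real \<Rightarrow> nat \<Rightarrow> nat \<Rightarrow> real \<Rightarrow> real" where
  "R_sum y r k x = (\<Sum>qs\<in>prime_chains y r k x. 1 / real (last qs))"

definition S_count :: "real \<Rightarrow> nat \<Rightarrow> nat \<Rightarrow> real \<Rightarrow> nat" where
  "S_count y r k x = card {(qs, n). qs \<in> prime_chains y r k x \<and> n \<ge> 1 \<and> last qs \<le> n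
                                     \<and> real n \<le> x \<and> last qs dvd n}"

end

theory Submission
  imports Defs "HOL-Analysis.Analysis"
begin

text \<open>
  Stripping the first prime q_1 off a chain reduces R(r, k, x) to the sum of R(q_1, k - 1, x)
  over primes q_1 = r m + 1 <= x, so by induction it suffices to bound the sum of 1/q over
  such q. Since 1/(r m + 1) < 1/(r m), that sum is at most 1/r times the harmonic sum up to
  x, i.e. at most (log x + 1)/r. For S, a chain ending in q_k has at most x/q_k admissible n,
  so S(r, k, x) <= x R(r, k, x).
\<close>

lemma harm_nat_floor_le_ln_plus_one:
  assumes "x \<ge> 1"
  shows "harm (nat \<lfloor>x\<rfloor>) \<le> ln x + (1 :: real)"
proof -
  define n where "n = nat \<lfloor>x\<rfloor>"
  have "n \<ge> 1" "real n \<le> x"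
    using assms by (simp_all add: n_def le_nat_floor)
  have "harm n - ln (real n) \<le> harm 1 - ln (real (1 :: nat))"
    using euler_mascheroni_sequence_decreasing[of 1 n] \<open>n \<ge> 1\<close> by simp
  then have "harm n \<le> ln (real n) + (1 :: real)"
    by (simp add: harm_def)
  also have "ln (real n) \<le> ln x"
    using \<open>n \<ge> 1\<close> \<open>real n \<le> x\<close> by simp
  finally show ?thesis
    by (simp add: n_def)
qed

lemma sum_inverse_one_mod_le:
  fixes r :: nat and x :: real
  assumes "r > 0" and "x \<ge> 1"
    and A: "\<And>q. q \<in> A \<Longrightarrow> r < q \<and> real q \<le> x \<and> r dvd q - 1"
  shows "(\<Sum>q\<in>A. 1 / real q) \<le> (ln x + 1) / real r"
proof -
  define m where "m q = (q - 1) div r" for q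
  have q_eq: "q = r * m q + 1" if "q \<in> A" for q
    using A[OF that] by (auto simp: m_def)
  have m_pos: "m q \<ge> 1" if "q \<in> A" for q
    using q_eq[OF that] A[OF that] \<open>r > 0\<close> by (cases "m q") auto
  have "inj_on m A"
    by (rule inj_onI) (metis q_eq)
  have m_range: "m ` A \<subseteq> {1..nat \<lfloor>x\<rfloor>}"
  proof
    fix n assume "n \<in> m ` A"
    then obtain q where q: "q \<in> A" "n = m q" by blast
    have "n \<le> r * n"
      using \<open>r > 0\<close> by simp
    also have "\<dots> < q"
      using q_eq[OF q(1)] q(2) by simp
    finally have "n \<le> q"
      by simp
    then show "n \<in> {1..nat \<lfloor>x\<rfloor>}"
      using A[OF q(1)] m_pos[OF q(1)] q(2) by (simp add: le_nat_floor)
  qed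
  have "(\<Sum>q\<in>A. 1 / real q) \<le> (\<Sum>q\<in>A. 1 / real r * (1 / real (m q)))"
  proof (rule sum_mono)
    fix q assume "q \<in> A"
    have "real r * real (m q) \<le> real q"
      using q_eq[OF \<open>q \<in> A\<close>] by (metis of_nat_mult of_nat_le_iff le_add1)
    moreover have "real r * real (m q) > 0"
      using \<open>r > 0\<close> m_pos[OF \<open>q \<in> A\<close>] by simp
    ultimately show "1 / real q \<le> 1 / real r * (1 / real (m q))"
      by (simp add: frac_le)
  qed
  also have "\<dots> = 1 / real r * (\<Sum>n\<in>m ` A. 1 / real n)"
    by (simp add: sum_distrib_left sum.reindex[OF \<open>inj_on m A\<close>])
  also have "\<dots> \<le> 1 / real r * harm (nat \<lfloor>x\<rfloor>)"
    unfolding harm_def inverse_eq_divide by (intro mult_left_mono sum_mono2 m_range) auto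
  also have "\<dots> \<le> 1 / real r * (ln x + 1)"
    by (intro mult_left_mono harm_nat_floor_le_ln_plus_one \<open>x \<ge> 1\<close>) auto
  finally show ?thesis
    by simp
qed

definition prime_successors :: "nat \<Rightarrow> real \<Rightarrow> nat set" where
  "prime_successors r x = {q. prime q \<and> real q \<le> x \<and> r < q \<and> r dvd q - 1}"

lemma sum_inverse_prime_successors_le:
  assumes "r > 0" and "x \<ge> 1"
  shows "(\<Sum>q\<in>prime_successors r x. 1 / real q) \<le> (ln x + 1) / real r"
  using assms by (intro sum_inverse_one_mod_le) (auto simp: prime_successors_def)

lemma finite_prime_successors: "finite (prime_successors r x)"
  by (rule finite_subset[of _ "{..nat \<lfloor>x\<rfloor>}"]) (auto simp: prime_successors_def le_nat_floor)

lemma finite_prime_chains: "finite (prime_chains y r k x)"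
proof (rule finite_subset)
  show "prime_chains y r k x \<subseteq> {qs. set qs \<subseteq> {..nat \<lfloor>x\<rfloor>} \<and> length qs = k}"
    by (auto simp: prime_chains_def le_nat_floor)
qed (rule finite_lists_length_eq, simp)

lemma prime_chains_Suc_subset:
  "prime_chains y r (Suc k) x
     \<subseteq> (\<lambda>(q, qs). q # qs) ` (SIGMA q:prime_successors r x. prime_chains y q k x)"
proof
  fix qs' assume qs': "qs' \<in> prime_chains y r (Suc k) x"
  then obtain q qs where qs'_eq: "qs' = q # qs"
    by (cases qs') (auto simp: prime_chains_def)
  have dvd: "\<forall>i<Suc k. (r # q # qs) ! i dvd (q # qs) ! i - 1"
    using qs' qs'_eq by (simp add: prime_chains_def)
  have "q \<in> prime_successors r x"
    using qs' dvd[rule_format, of 0] by (auto simp: prime_successors_def prime_chains_def qs'_eq)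
  moreover have "qs \<in> prime_chains y q k x"
    using qs' dvd by (auto simp: prime_chains_def qs'_eq prime_successors_def)
  ultimately show "qs' \<in> (\<lambda>(q, qs). q # qs) ` (SIGMA q:prime_successors r x. prime_chains y q k x)"
    using qs'_eq by force
qed

lemma sum_prime_chains_Suc_le:
  fixes f :: "nat list \<Rightarrow> real"
  assumes "\<And>qs. f qs \<ge> 0"
  shows "(\<Sum>qs\<in>prime_chains y r (Suc k) x. f qs)
           \<le> (\<Sum>q\<in>prime_successors r x. \<Sum>qs\<in>prime_chains y q k x. f (q # qs))"
proof -
  let ?S = "SIGMA q:prime_successors r x. prime_chains y q k x"
  have "finite ?S"
    by (simp add: finite_prime_successors finite_prime_chains)
  have "inj_on (\<lambda>(q, qs). q # qs) ?S"
    by (auto simp: inj_on_def)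
  have "(\<Sum>qs\<in>prime_chains y r (Suc k) x. f qs) \<le> (\<Sum>qs\<in>(\<lambda>(q, qs). q # qs) ` ?S. f qs)"
    by (intro sum_mono2 prime_chains_Suc_subset assms finite_imageI \<open>finite ?S\<close>)
  also have "\<dots> = (\<Sum>p\<in>?S. f (fst p # snd p))"
    by (subst sum.reindex[OF \<open>inj_on _ ?S\<close>]) (simp add: case_prod_beta)
  also have "\<dots> = (\<Sum>q\<in>prime_successors r x. \<Sum>qs\<in>prime_chains y q k x. f (q # qs))"
    using sum.Sigma[of "prime_successors r x" "\<lambda>q. prime_chains y q k x" "\<lambda>q qs. f (q # qs)"]
    by (simp add: finite_prime_successors finite_prime_chains case_prod_beta)
  finally show ?thesis .
qed

lemma R_sum_one_le: "R_sum y r 1 x \<le> (\<Sum>q\<in>prime_successors r x. 1 / real q)"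
proof -
  have "R_sum y r 1 x
          \<le> (\<Sum>q\<in>prime_successors r x. \<Sum>qs\<in>prime_chains y q 0 x. 1 / real (last (q # qs)))"
    unfolding R_sum_def One_nat_def by (rule sum_prime_chains_Suc_le) simp
  also have "\<dots> \<le> (\<Sum>q\<in>prime_successors r x. 1 / real q)"
  proof (rule sum_mono)
    fix q
    have "prime_chains y q 0 x \<subseteq> {[]}"
      by (auto simp: prime_chains_def)
    then have "(\<Sum>qs\<in>prime_chains y q 0 x. 1 / real (last (q # qs)))
                 \<le> (\<Sum>qs\<in>{[]}. 1 / real (last (q # qs)))"
      by (intro sum_mono2) auto
    then show "(\<Sum>qs\<in>prime_chains y q 0 x. 1 / real (last (q # qs))) \<le> 1 / real q"
      by simp
  qed
  finally show ?thesis .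
qed

lemma R_sum_Suc_le:
  assumes "k > 0"
  shows "R_sum y r (Suc k) x \<le> (\<Sum>q\<in>prime_successors r x. R_sum y q k x)"
proof -
  have "R_sum y r (Suc k) x
          \<le> (\<Sum>q\<in>prime_successors r x. \<Sum>qs\<in>prime_chains y q k x. 1 / real (last (q # qs)))"
    unfolding R_sum_def by (rule sum_prime_chains_Suc_le) simp
  also have "\<dots> = (\<Sum>q\<in>prime_successors r x. R_sum y q k x)"
    unfolding R_sum_def using assms
    by (intro sum.cong refl) (auto simp: prime_chains_def)
  finally show ?thesis .
qed

lemma R_sum_le:
  assumes "k > 0" and "r > 0" and "x \<ge> 1"
  shows "R_sum y r k x \<le> (ln x + 1) ^ k / real r"
  using assms(1,2)
proof (induction k arbitrary: r rule: nat_induct_non_zero)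
  case 1
  have "R_sum y r 1 x \<le> (\<Sum>q\<in>prime_successors r x. 1 / real q)"
    by (rule R_sum_one_le)
  also have "\<dots> \<le> (ln x + 1) / real r"
    using 1 \<open>x \<ge> 1\<close> by (rule sum_inverse_prime_successors_le)
  finally show ?case
    by simp
next
  case (Suc k)
  have "R_sum y r (Suc k) x \<le> (\<Sum>q\<in>prime_successors r x. R_sum y q k x)"
    by (rule R_sum_Suc_le[OF Suc.hyps])
  also have "\<dots> \<le> (\<Sum>q\<in>prime_successors r x. (ln x + 1) ^ k * (1 / real q))"
    using Suc.IH by (intro sum_mono) (auto simp: prime_successors_def)
  also have "\<dots> = (ln x + 1) ^ k * (\<Sum>q\<in>prime_successors r x. 1 / real q)"
    by (simp add: sum_distrib_left)
  also have "\<dots> \<le> (ln x + 1) ^ k * ((ln x + 1) / real r)"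
    using \<open>x \<ge> 1\<close> Suc.prems
    by (intro mult_left_mono sum_inverse_prime_successors_le) auto
  finally show ?case
    by (simp add: mult_ac)
qed

lemma card_multiples_le:
  fixes p :: nat and x :: real
  assumes "p > 0" and "x \<ge> 0"
  shows "real (card {n. n \<ge> 1 \<and> real n \<le> x \<and> p dvd n}) \<le> x / real p"
proof -
  let ?N = "{n. n \<ge> 1 \<and> real n \<le> x \<and> p dvd n}"
  have "?N \<subseteq> (\<lambda>j. p * j) ` {1..nat \<lfloor>x / real p\<rfloor>}"
  proof
    fix n assume n: "n \<in> ?N"
    then obtain j where j: "n = p * j" by blast
    have "j \<ge> 1"
      using n j by (cases j) auto
    moreover have "real j \<le> x / real p"
      using n j \<open>p > 0\<close> by (simp add: field_simps)
    ultimately show "n \<in> (\<lambda>j. p * j) ` {1..nat \<lfloor>x / real p\<rfloor>}"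
      using j by (auto simp: le_nat_floor)
  qed
  then have "card ?N \<le> card ((\<lambda>j. p * j) ` {1..nat \<lfloor>x / real p\<rfloor>})"
    by (intro card_mono finite_imageI) auto
  also have "\<dots> \<le> nat \<lfloor>x / real p\<rfloor>"
    using card_image_le[of "{1..nat \<lfloor>x / real p\<rfloor>}" "\<lambda>j. p * j"] by simp
  finally have "real (card ?N) \<le> real (nat \<lfloor>x / real p\<rfloor>)"
    by simp
  also have "\<dots> \<le> x / real p"
    using assms by simp
  finally show ?thesis .
qed

lemma S_count_le_R_sum:
  assumes "k > 0" and "x \<ge> 0"
  shows "real (S_count y r k x) \<le> x * R_sum y r k x"
proof -
  define N where "N qs = {n. n \<ge> 1 \<and> last qs \<le> n \<and> real n \<le> x \<and> last qs dvd n}" for qs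
  have "finite (N qs)" for qs
    by (rule finite_subset[of _ "{..nat \<lfloor>x\<rfloor>}"]) (auto simp: N_def le_nat_floor)
  have S_eq: "{(qs, n). qs \<in> prime_chains y r k x \<and> n \<ge> 1 \<and> last qs \<le> n
                 \<and> real n \<le> x \<and> last qs dvd n} = (SIGMA qs:prime_chains y r k x. N qs)"
    by (auto simp: N_def)
  have "real (S_count y r k x) = (\<Sum>qs\<in>prime_chains y r k x. real (card (N qs)))"
    unfolding S_count_def S_eq by (simp add: finite_prime_chains \<open>\<And>qs. finite (N qs)\<close>)
  also have "\<dots> \<le> (\<Sum>qs\<in>prime_chains y r k x. x * (1 / real (last qs)))"
  proof (rule sum_mono)
    fix qs assume "qs \<in> prime_chains y r k x"
    then have "prime (last qs)"
      using \<open>k > 0\<close> by (auto simp: prime_chains_def)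
    then have "real (card (N qs)) \<le> real (card {n. n \<ge> 1 \<and> real n \<le> x \<and> last qs dvd n})"
      by (intro of_nat_mono card_mono) (auto simp: N_def le_nat_floor
          intro!: finite_subset[of _ "{..nat \<lfloor>x\<rfloor>}"])
    also have "\<dots> \<le> x / real (last qs)"
      using \<open>prime (last qs)\<close> \<open>x \<ge> 0\<close> by (intro card_multiples_le) (auto simp: prime_gt_0_nat)
    finally show "real (card (N qs)) \<le> x * (1 / real (last qs))"
      by simp
  qed
  also have "\<dots> = x * R_sum y r k x"
    by (simp add: R_sum_def sum_distrib_left)
  finally show ?thesis .
qed

theorem lemma4p2:
  fixes r k :: nat and x y :: real
  assumes "r > 0" and "k > 0" and "x \<ge> 1"
  shows "R_sum y r k x \<le> (ln x + 1) ^ k / real r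
         \<and> real (S_count y r k x) \<le> x * (ln x + 1) ^ k / real r"
proof
  show R: "R_sum y r k x \<le> (ln x + 1) ^ k / real r"
    using R_sum_le assms by blast
  have "real (S_count y r k x) \<le> x * R_sum y r k x"
    using S_count_le_R_sum assms by simp
  also have "\<dots> \<le> x * ((ln x + 1) ^ k / real r)"
    using R assms by (intro mult_left_mono) auto
  finally show "real (S_count y r k x) \<le> x * (ln x + 1) ^ k / real r"
    by simp
qed

end
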